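(* Let $a,b,q$ be complex numbers with $|q|<1$, $b\neq0$, and let $G(z)=\sum_{n=0}^{\infty}t_nz^n\in\mathbb{C}[[z]]$. Define, for parameters $\alpha,\beta$, $$\widetilde{G}(z;\alpha,\beta):=\sum_{n=0}^\infty t_n z^n\frac{(\alpha z;q)_n}{(\beta z;q)_n}.$$ Then, as formal power series in $z$, $$\frac{(az;q)_\infty}{(bz;q)_\infty}G(z)=\sum_{n=0}^{\infty}\frac{(aq/b;q)_n(az;q)_n}{(q;q)_n(bz;q)_n}(bz)^nq^{n(n-1)}\Big(\widetilde{G}(zq^n;a,b)-azq^{2n}\,\widetilde{G}(zq^{n+1};a/q,b/q)\Big).$$
   Context: $(x;q)_\infty=\prod_{j\ge0}(1-xq^j)$ and $(x;q)_n=\prod_{j=0}^{n-1}(1-xq^j)$ for integers $n\ge0$; products and quotients of these with arguments multiples of $z$ are regarded as formal power series in $z$. *)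

theory Defs
  imports Complex_Main "HOL-Computational_Algebra.Formal_Power_Series"
begin

definition qpoch :: "complex \<Rightarrow> complex \<Rightarrow> nat \<Rightarrow> complex" where
  "qpoch c q n = (\<Prod>j<n. 1 - c * q ^ j)"

definition qpoch_fps :: "complex \<Rightarrow> complex \<Rightarrow> nat \<Rightarrow> complex fps" where
  "qpoch_fps c q n = (\<Prod>j<n. 1 - fps_const (c * q ^ j) * fps_X)"

definition fps_lim :: "(nat \<Rightarrow> complex fps) \<Rightarrow> complex fps" where
  "fps_lim f = Abs_fps (\<lambda>k. lim (\<lambda>n. fps_nth (f n) k))"

definition fps_suminf :: "(nat \<Rightarrow> complex fps) \<Rightarrow> complex fps" where
  "fps_suminf f = Abs_fps (\<lambda>k. \<Sum>n. fps_nth (f n) k)"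

definition qpoch_inf_fps :: "complex \<Rightarrow> complex \<Rightarrow> complex fps" where
  "qpoch_inf_fps c q = fps_lim (\<lambda>n. qpoch_fps c q n)"

definition Gtilde :: "complex \<Rightarrow> complex fps \<Rightarrow> complex \<Rightarrow> complex \<Rightarrow> complex fps" where
  "Gtilde q G \<alpha> \<beta> = fps_suminf (\<lambda>n. fps_const (fps_nth G n) * fps_X ^ n
        * qpoch_fps \<alpha> q n * inverse (qpoch_fps \<beta> q n))"

definition fps_subst_scale :: "complex fps \<Rightarrow> complex \<Rightarrow> complex fps" where
  "fps_subst_scale f c = f oo (fps_const c * fps_X)"

end

theory Submission
  imports Defs
begin

unbundle fps_syntax

text \<open>
  Write F(a,b) for (az;q)_\<infinity>/(bz;q)_\<infinity>. It is the only power series with constant term 1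
  satisfying F(z)(1 - bz) = (1 - az) F(qz). For G = 1 the n-th summand \<tau>_n(a,b) of the
  right-hand side has defect \<tau>_n(z)(1 - bz) - (1 - az) \<tau>_n(qz) = W_n - W_(n+1) with W_0 = 0,
  so the sum of the \<tau>_n(a,b) satisfies the same equation and equals F(a,b).
  In general F(a,b) z^m = z^m (az;q)_m/(bz;q)_m F(aq^m, bq^m); expanding the last factor by
  the case G = 1 and exchanging the sums over m and n gives the theorem, since the (n,m) term
  is the n-th summand of the right-hand side built from the m-th term of G-tilde.
\<close>

section \<open>Sums of power series of increasing order\<close>

lemma fps_X_power_dvd_iff:
  fixes f :: "'a::comm_ring_1 fps"
  shows "fps_X ^ n dvd f \<longleftrightarrow> (\<forall>i<n. f $ i = 0)"
proof
  assume "fps_X ^ n dvd f"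
  then show "\<forall>i<n. f $ i = 0"
    by (auto simp: fps_X_power_mult_nth dvd_def)
next
  assume "\<forall>i<n. f $ i = 0"
  then have "f = fps_X ^ n * fps_shift n f"
    by (intro fps_ext) (simp add: fps_X_power_mult_nth)
  then show "fps_X ^ n dvd f"
    by (rule dvdI)
qed

lemma fps_suminf_nth:
  assumes "\<And>n. fps_X ^ n dvd f n"
  shows "fps_suminf f $ k = (\<Sum>n\<le>k. f n $ k)"
proof -
  have "f n $ k = 0" if "n \<notin> {..k}" for n
    using assms[of n] that by (simp add: fps_X_power_dvd_iff)
  then have "(\<Sum>n. f n $ k) = (\<Sum>n\<le>k. f n $ k)"
    by (intro suminf_finite) auto
  then show ?thesis
    by (simp add: fps_suminf_def)
qed

lemma fps_X_power_dvd_fps_suminf: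
  assumes "\<And>n. fps_X ^ n dvd f n" and "\<And>n. fps_X ^ m dvd f n"
  shows "fps_X ^ m dvd fps_suminf f"
  using assms by (simp add: fps_X_power_dvd_iff fps_suminf_nth)

lemma fps_suminf_diff:
  assumes "\<And>n. fps_X ^ n dvd f n" and "\<And>n. fps_X ^ n dvd g n"
  shows "fps_suminf (\<lambda>n. f n - g n) = fps_suminf f - fps_suminf g"
  by (rule fps_ext) (simp add: assms fps_suminf_nth dvd_diff sum_subtractf)

lemma fps_suminf_mult:
  assumes "\<And>n. fps_X ^ n dvd f n"
  shows "fps_suminf (\<lambda>n. A * f n) = A * fps_suminf f"
proof (rule fps_ext)
  fix k
  have "f n $ (k - i) = 0" if "k - i < n" for n i
    using assms[of n] that by (simp add: fps_X_power_dvd_iff)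
  then have truncate: "(\<Sum>n\<le>k - i. f n $ (k - i)) = (\<Sum>n\<le>k. f n $ (k - i))" for i
    by (intro sum.mono_neutral_left) auto
  have "fps_suminf (\<lambda>n. A * f n) $ k = (\<Sum>n\<le>k. \<Sum>i=0..k. A $ i * f n $ (k - i))"
    by (simp add: assms dvd_mult fps_suminf_nth fps_mult_nth)
  also have "\<dots> = (\<Sum>i=0..k. A $ i * (\<Sum>n\<le>k - i. f n $ (k - i)))"
    by (simp add: truncate sum_distrib_left sum.swap[of _ "{0..k}"])
  also have "\<dots> = (A * fps_suminf f) $ k"
    by (simp add: assms fps_suminf_nth fps_mult_nth)
  finally show "fps_suminf (\<lambda>n. A * f n) $ k = (A * fps_suminf f) $ k" .
qed

lemma fps_suminf_mult_right:
  assumes "\<And>n. fps_X ^ n dvd f n"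
  shows "fps_suminf (\<lambda>n. f n * A) = fps_suminf f * A"
  using fps_suminf_mult[OF assms, of A] by (simp add: mult.commute)

lemma fps_suminf_telescope:
  assumes "\<And>n. fps_X ^ n dvd f n"
  shows "fps_suminf (\<lambda>n. f n - f (Suc n)) = f 0"
proof (rule fps_ext)
  fix k
  have "fps_X ^ n dvd f (Suc n)" for n
    using assms[of "Suc n"] by (rule dvd_trans[rotated]) (simp add: le_imp_power_dvd)
  then have "fps_suminf (\<lambda>n. f n - f (Suc n)) $ k = f 0 $ k - f (Suc k) $ k"
    by (simp add: assms fps_suminf_nth sum_telescope[of "\<lambda>n. f n $ k"])
  also have "f (Suc k) $ k = 0"
    using assms[of "Suc k"] unfolding fps_X_power_dvd_iff by simp
  finally show "fps_suminf (\<lambda>n. f n - f (Suc n)) $ k = f 0 $ k"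
    by simp
qed

lemma fps_suminf_swap:
  assumes "\<And>n m. fps_X ^ n dvd f n m" and "\<And>n m. fps_X ^ m dvd f n m"
  shows "fps_suminf (\<lambda>m. fps_suminf (\<lambda>n. f n m)) = fps_suminf (\<lambda>n. fps_suminf (\<lambda>m. f n m))"
proof (rule fps_ext)
  fix k
  have inner: "fps_X ^ m dvd fps_suminf (\<lambda>n. f n m)" "fps_X ^ n dvd fps_suminf (\<lambda>m. f n m)" for n m
    using assms by (blast intro: fps_X_power_dvd_fps_suminf)+
  show "fps_suminf (\<lambda>m. fps_suminf (\<lambda>n. f n m)) $ k = fps_suminf (\<lambda>n. fps_suminf (\<lambda>m. f n m)) $ k"
    unfolding fps_suminf_nth[OF inner(1)] fps_suminf_nth[OF inner(2)]
      fps_suminf_nth[OF assms(1)] fps_suminf_nth[OF assms(2)]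
    by (rule sum.swap)
qed

lemma fps_suminf_monomials: "fps_suminf (\<lambda>m. fps_const (f $ m) * fps_X ^ m) = f"
  by (rule fps_ext) (simp add: fps_suminf_nth mult_delta_right)

lemma fps_subst_scale_nth [simp]: "fps_subst_scale f c $ k = c ^ k * f $ k"
  by (simp add: fps_subst_scale_def)

lemma fps_subst_scale_mult [simp]:
  "fps_subst_scale (f * g) c = fps_subst_scale f c * fps_subst_scale g c"
  by (simp add: fps_subst_scale_def fps_compose_mult_distrib)

lemma fps_subst_scale_diff [simp]:
  "fps_subst_scale (f - g) c = fps_subst_scale f c - fps_subst_scale g c"
  by (simp add: fps_subst_scale_def fps_compose_sub_distrib)

lemma fps_subst_scale_const [simp]: "fps_subst_scale (fps_const d) c = fps_const d"
  by (simp add: fps_subst_scale_def)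

lemma fps_subst_scale_1 [simp]: "fps_subst_scale 1 c = 1"
  by (simp add: fps_subst_scale_def)

lemma fps_subst_scale_X [simp]: "fps_subst_scale fps_X c = fps_const c * fps_X"
  by (simp add: fps_subst_scale_def)

lemma fps_subst_scale_power [simp]: "fps_subst_scale (f ^ n) c = fps_subst_scale f c ^ n"
  by (simp add: fps_subst_scale_def fps_compose_power)

lemma fps_subst_scale_inverse [simp]:
  "f $ 0 \<noteq> 0 \<Longrightarrow> fps_subst_scale (inverse f) c = inverse (fps_subst_scale f c)"
  by (simp add: fps_subst_scale_def fps_inverse_compose)

lemma fps_X_power_dvd_subst_scale: "fps_X ^ n dvd f \<Longrightarrow> fps_X ^ n dvd fps_subst_scale f c"
  by (simp add: fps_X_power_dvd_iff)

lemma fps_subst_scale_suminf: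
  assumes "\<And>n. fps_X ^ n dvd f n"
  shows "fps_subst_scale (fps_suminf f) c = fps_suminf (\<lambda>n. fps_subst_scale (f n) c)"
  by (rule fps_ext) (simp add: assms fps_X_power_dvd_subst_scale fps_suminf_nth sum_distrib_left)

lemma power_neq_one_if_norm_less_one:
  fixes q :: "'a::real_normed_div_algebra"
  assumes "norm q < 1" and "0 < k"
  shows "q ^ k \<noteq> 1"
proof
  assume "q ^ k = 1"
  then have "norm q ^ k = 1"
    by (metis norm_one norm_power)
  with assms show False
    using power_less_one_iff[of "norm q" k] by simp
qed

lemma qpoch_Suc: "qpoch c q (Suc n) = qpoch c q n * (1 - c * q ^ n)"
  by (simp add: qpoch_def)

lemma qpoch_q_nonzero:
  assumes "\<And>k. 0 < k \<Longrightarrow> q ^ k \<noteq> 1"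
  shows "qpoch q q n \<noteq> 0"
  using assms[of "Suc _"] by (auto simp: qpoch_def)

lemma qpoch_fps_0 [simp]: "qpoch_fps c q 0 = 1"
  by (simp add: qpoch_fps_def)

lemma qpoch_fps_Suc: "qpoch_fps c q (Suc n) = qpoch_fps c q n * (1 - fps_const (c * q ^ n) * fps_X)"
  by (simp add: qpoch_fps_def)

lemma qpoch_fps_Suc_shift: "qpoch_fps c q (Suc n) = (1 - fps_const c * fps_X) * qpoch_fps (c * q) q n"
  unfolding qpoch_fps_def prod.lessThan_Suc_shift by (simp add: mult.assoc)

lemma qpoch_fps_add: "qpoch_fps c q (m + n) = qpoch_fps c q m * qpoch_fps (c * q ^ m) q n"
  by (induction n) (simp_all add: qpoch_fps_Suc power_add mult_ac)

lemma qpoch_fps_nth_0 [simp]: "qpoch_fps c q n $ 0 = 1"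
  by (induction n) (simp_all add: qpoch_fps_Suc)

lemma qpoch_fps_Suc_nth_Suc:
  "qpoch_fps c q (Suc n) $ Suc k = qpoch_fps c q n $ Suc k - c * q ^ n * qpoch_fps c q n $ k"
  by (simp add: qpoch_fps_Suc algebra_simps)

lemma fps_subst_scale_qpoch_fps: "fps_subst_scale (qpoch_fps c q n) d = qpoch_fps (c * d) q n"
  by (induction n) (simp_all add: qpoch_fps_Suc mult_ac)

lemma inverse_qpoch_fps_Suc_shift:
  "inverse (qpoch_fps (c * q) q n) = (1 - fps_const c * fps_X) * inverse (qpoch_fps c q (Suc n))"
  by (simp add: qpoch_fps_Suc_shift fps_inverse_mult mult.assoc[symmetric] inverse_mult_eq_1')

lemma inverse_qpoch_fps_Suc:
  "inverse (qpoch_fps c q n) = (1 - fps_const (c * q ^ n) * fps_X) * inverse (qpoch_fps c q (Suc n))"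
  by (simp add: qpoch_fps_Suc fps_inverse_mult mult.assoc[symmetric] inverse_mult_eq_1')

context
  fixes q :: complex
  assumes norm_q: "norm q < 1"
begin

lemma convergent_qpoch_fps_nth: "convergent (\<lambda>n. qpoch_fps c q n $ k)"
proof (induction k)
  case 0
  then show ?case by (simp add: convergent_const)
next
  case (Suc k)
  then have "Bseq (\<lambda>n. qpoch_fps c q n $ k)"
    by (rule convergent_imp_Bseq)
  then obtain B where B: "\<And>n. norm (qpoch_fps c q n $ k) \<le> B"
    by (rule BseqE) blast
  define f where "f j = - (c * q ^ j * qpoch_fps c q j $ k)" for j
  have "summable (\<lambda>j. norm c * B * norm q ^ j)"
    using norm_q by (intro summable_mult summable_geometric) simp
  then have "summable f"
  proof (rule summable_comparison_test')
    show "norm (f j) \<le> norm c * B * norm q ^ j" for j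
      using mult_left_mono[OF B, of "norm c * norm q ^ j"]
      by (simp add: f_def norm_mult norm_power mult_ac)
  qed
  moreover have "(\<Sum>j<n. f j) = qpoch_fps c q n $ Suc k" for n
    by (induction n) (simp_all add: f_def qpoch_fps_Suc_nth_Suc)
  ultimately show ?case
    by (simp add: summable_iff_convergent)
qed

lemma qpoch_fps_nth_tendsto: "(\<lambda>n. qpoch_fps c q n $ k) \<longlonglongrightarrow> qpoch_inf_fps c q $ k"
  using convergent_qpoch_fps_nth[of c k]
  by (simp add: qpoch_inf_fps_def fps_lim_def convergent_LIMSEQ_iff)

lemma qpoch_inf_fps_nth_0 [simp]: "qpoch_inf_fps c q $ 0 = 1"
  using qpoch_fps_nth_tendsto[of c 0] by (simp add: LIMSEQ_const_iff)

lemma qpoch_inf_fps_split: "qpoch_inf_fps c q = qpoch_fps c q m * qpoch_inf_fps (c * q ^ m) q"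
proof (rule fps_ext)
  fix k
  have "(\<lambda>n. qpoch_fps c q (n + m) $ k) \<longlonglongrightarrow> qpoch_inf_fps c q $ k"
    by (rule LIMSEQ_ignore_initial_segment[OF qpoch_fps_nth_tendsto])
  moreover have "(\<lambda>n. qpoch_fps c q (n + m) $ k)
      \<longlonglongrightarrow> (qpoch_fps c q m * qpoch_inf_fps (c * q ^ m) q) $ k"
    unfolding add.commute[of _ m] qpoch_fps_add fps_mult_nth
    by (intro tendsto_intros qpoch_fps_nth_tendsto)
  ultimately show "qpoch_inf_fps c q $ k = (qpoch_fps c q m * qpoch_inf_fps (c * q ^ m) q) $ k"
    by (rule LIMSEQ_unique)
qed

lemma qpoch_inf_fps_shift: "qpoch_inf_fps c q = (1 - fps_const c * fps_X) * qpoch_inf_fps (c * q) q"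
  using qpoch_inf_fps_split[of c 1] by (simp add: qpoch_fps_Suc)

lemma fps_subst_scale_qpoch_inf_fps: "fps_subst_scale (qpoch_inf_fps c q) d = qpoch_inf_fps (c * d) q"
proof (rule fps_ext)
  fix k
  have "(\<lambda>n. d ^ k * qpoch_fps c q n $ k) \<longlonglongrightarrow> d ^ k * qpoch_inf_fps c q $ k"
    by (intro tendsto_intros qpoch_fps_nth_tendsto)
  moreover have "d ^ k * qpoch_fps c q n $ k = qpoch_fps (c * d) q n $ k" for n
    using arg_cong[OF fps_subst_scale_qpoch_fps, of "\<lambda>f. f $ k" c q n d] by simp
  ultimately have "(\<lambda>n. qpoch_fps (c * d) q n $ k) \<longlonglongrightarrow> d ^ k * qpoch_inf_fps c q $ k"
    by simp
  with qpoch_fps_nth_tendsto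
  show "fps_subst_scale (qpoch_inf_fps c q) d $ k = qpoch_inf_fps (c * d) q $ k"
    by (simp add: LIMSEQ_unique)
qed

end

section \<open>The quotient (az;q)_\<infinity>/(bz;q)_\<infinity> and its q-difference equation\<close>

definition qpoch_quot_fps :: "complex \<Rightarrow> complex \<Rightarrow> complex \<Rightarrow> complex fps" where
  "qpoch_quot_fps q a b = qpoch_inf_fps a q * inverse (qpoch_inf_fps b q)"

context
  fixes q :: complex
  assumes norm_q: "norm q < 1"
begin

lemma qpoch_quot_fps_nth_0 [simp]: "qpoch_quot_fps q a b $ 0 = 1"
  by (simp add: qpoch_quot_fps_def norm_q)

lemma qpoch_quot_fps_split:
  "qpoch_quot_fps q a b
    = qpoch_fps a q m * inverse (qpoch_fps b q m) * qpoch_quot_fps q (a * q ^ m) (b * q ^ m)"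
  unfolding qpoch_quot_fps_def
  by (subst (1 2) qpoch_inf_fps_split[OF norm_q, of _ m]) (simp add: fps_inverse_mult mult_ac)

lemma qpoch_quot_fps_qdiff:
  "qpoch_quot_fps q a b * (1 - fps_const b * fps_X)
    = (1 - fps_const a * fps_X) * fps_subst_scale (qpoch_quot_fps q a b) q"
proof -
  have "qpoch_quot_fps q a b * (1 - fps_const b * fps_X)
      = qpoch_inf_fps a q * inverse (qpoch_inf_fps (b * q) q)
        * (inverse (1 - fps_const b * fps_X) * (1 - fps_const b * fps_X))"
    unfolding qpoch_quot_fps_def
    by (subst qpoch_inf_fps_shift[OF norm_q, of b]) (simp only: fps_inverse_mult mult_ac)
  also have "\<dots> = qpoch_inf_fps a q * inverse (qpoch_inf_fps (b * q) q)"
    by (simp add: inverse_mult_eq_1)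
  also have "\<dots> = (1 - fps_const a * fps_X) * fps_subst_scale (qpoch_quot_fps q a b) q"
    by (subst qpoch_inf_fps_shift[OF norm_q, of a])
      (simp add: qpoch_quot_fps_def norm_q fps_subst_scale_qpoch_inf_fps mult.assoc)
  finally show ?thesis .
qed

end

lemma qdiff_solution_unique:
  assumes q: "\<And>k. 0 < k \<Longrightarrow> q ^ k \<noteq> 1"
    and f: "f * (1 - fps_const b * fps_X) = (1 - fps_const a * fps_X) * fps_subst_scale f q"
    and g: "g * (1 - fps_const b * fps_X) = (1 - fps_const a * fps_X) * fps_subst_scale g q"
    and "f $ 0 = g $ 0"
  shows "f = g"
proof -
  define h where "h = f - g"
  have h: "h * (1 - fps_const b * fps_X) = (1 - fps_const a * fps_X) * fps_subst_scale h q"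
    unfolding h_def using f g
    by (simp only: left_diff_distrib[of f g] fps_subst_scale_diff
        right_diff_distrib[of "1 - fps_const a * fps_X"])
  have "h $ k = 0" for k
  proof (induction k)
    case 0
    then show ?case using \<open>f $ 0 = g $ 0\<close> by (simp add: h_def)
  next
    case (Suc k)
    have "(h * (1 - fps_const b * fps_X)) $ Suc k = ((1 - fps_const a * fps_X) * fps_subst_scale h q) $ Suc k"
      by (simp only: h)
    then have "(1 - q ^ Suc k) * h $ Suc k = 0"
      using Suc by (simp add: algebra_simps)
    with q[of "Suc k"] show ?case by simp
  qed
  then show ?thesis
    by (simp add: h_def fps_eq_iff)
qed

section \<open>Expansion of the quotient\<close>

definition qbinom_coeff :: "complex \<Rightarrow> complex \<Rightarrow> complex \<Rightarrow> nat \<Rightarrow> complex" where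
  "qbinom_coeff q a b n = qpoch (a * q / b) q n / qpoch q q n"

lemma qbinom_coeff_0 [simp]: "qbinom_coeff q a b 0 = 1"
  by (simp add: qbinom_coeff_def qpoch_def)

lemma qbinom_coeff_Suc:
  assumes "\<And>k. 0 < k \<Longrightarrow> q ^ k \<noteq> 1" and "b \<noteq> 0"
  shows "qbinom_coeff q a b (Suc n) * (1 - q ^ Suc n) * b = qbinom_coeff q a b n * (b - a * q ^ Suc n)"
  using qpoch_q_nonzero[OF assms(1), of n] qpoch_q_nonzero[OF assms(1), of "Suc n"] assms(2)
  by (simp add: qbinom_coeff_def qpoch_Suc field_simps)

lemma qbinom_coeff_scale: "c \<noteq> 0 \<Longrightarrow> qbinom_coeff q (a * c) (b * c) n = qbinom_coeff q a b n"
  by (simp add: qbinom_coeff_def)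

definition quot_expansion_term :: "complex \<Rightarrow> complex \<Rightarrow> complex \<Rightarrow> nat \<Rightarrow> complex fps" where
  "quot_expansion_term q a b n =
     fps_const (qbinom_coeff q a b n) * qpoch_fps a q n * inverse (qpoch_fps b q n)
     * (fps_const b * fps_X) ^ n * fps_const (q ^ (n * (n - 1)))
     * (1 - fps_const (a * q ^ (2 * n)) * fps_X)"

definition quot_expansion_telescoper :: "complex \<Rightarrow> complex \<Rightarrow> complex \<Rightarrow> nat \<Rightarrow> complex fps" where
  "quot_expansion_telescoper q a b n =
     fps_const (qbinom_coeff q a b n * (1 - q ^ n)) * qpoch_fps a q n * inverse (qpoch_fps b q n)
     * (fps_const b * fps_X) ^ n * fps_const (q ^ (n * (n - 1))) * (1 - fps_const b * fps_X)"

lemma quot_expansion_telescoper_0 [simp]: "quot_expansion_telescoper q a b 0 = 0"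
  by (simp add: quot_expansion_telescoper_def)

lemma fps_X_power_dvd_scaled_X_power: "fps_X ^ n dvd (fps_const c * fps_X) ^ n"
  by (simp add: power_mult_distrib)

lemma fps_X_power_dvd_quot_expansion_term: "fps_X ^ n dvd quot_expansion_term q a b n"
  unfolding quot_expansion_term_def
  by (intro dvd_mult dvd_mult2 fps_X_power_dvd_scaled_X_power)

lemma fps_X_power_dvd_quot_expansion_telescoper: "fps_X ^ n dvd quot_expansion_telescoper q a b n"
  unfolding quot_expansion_telescoper_def
  by (intro dvd_mult dvd_mult2 fps_X_power_dvd_scaled_X_power)

lemma quot_expansion_telescoper_Suc:
  assumes "\<And>k. 0 < k \<Longrightarrow> q ^ k \<noteq> 1" and "b \<noteq> 0"
  shows "quot_expansion_telescoper q a b (Suc n)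
    = fps_const (qbinom_coeff q a b n) * (fps_const b - fps_const (a * q ^ Suc n))
      * qpoch_fps a q (Suc n) * inverse (qpoch_fps b q (Suc n)) * (fps_const b * fps_X) ^ n
      * fps_X * fps_const (q ^ (n * (n - 1) + n * 2)) * (1 - fps_const b * fps_X)"
proof -
  have exponent: "Suc n * (Suc n - 1) = n * (n - 1) + n * 2"
    by (cases n) auto
  have "quot_expansion_telescoper q a b (Suc n)
      = (fps_const (qbinom_coeff q a b (Suc n) * (1 - q ^ Suc n)) * fps_const b)
        * qpoch_fps a q (Suc n) * inverse (qpoch_fps b q (Suc n)) * (fps_const b * fps_X) ^ n
        * fps_X * fps_const (q ^ (n * (n - 1) + n * 2)) * (1 - fps_const b * fps_X)"
    unfolding quot_expansion_telescoper_def power_Suc2 exponent by (simp only: mult_ac)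
  also have "fps_const (qbinom_coeff q a b (Suc n) * (1 - q ^ Suc n)) * fps_const b
      = fps_const (qbinom_coeff q a b n) * (fps_const b - fps_const (a * q ^ Suc n))"
    by (simp only: fps_const_mult fps_const_sub qbinom_coeff_Suc[OF assms])
  finally show ?thesis .
qed

lemma quot_expansion_term_qdiff:
  assumes q: "\<And>k. 0 < k \<Longrightarrow> q ^ k \<noteq> 1" and "b \<noteq> 0"
  shows "quot_expansion_term q a b n * (1 - fps_const b * fps_X)
           - (1 - fps_const a * fps_X) * fps_subst_scale (quot_expansion_term q a b n) q
         = quot_expansion_telescoper q a b n - quot_expansion_telescoper q a b (Suc n)"
proof -
  define U where "U = fps_const (q ^ n)"
  define A where "A = fps_const a"
  define B where "B = fps_const b"
  define D where "D = fps_const (qbinom_coeff q a b n) * qpoch_fps a q n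
      * inverse (qpoch_fps b q (Suc n)) * (fps_const b * fps_X) ^ n
      * fps_const (q ^ (n * (n - 1))) * (1 - fps_const b * fps_X)"
  \<comment> \<open>All four series are D times a polynomial of degree two in z, so the claim reduces
    to a polynomial identity.\<close>
  have unscaled: "quot_expansion_term q a b n * (1 - fps_const b * fps_X)
      = D * (1 - B * U * fps_X) * (1 - A * U ^ 2 * fps_X)"
    unfolding quot_expansion_term_def D_def inverse_qpoch_fps_Suc[of b q n]
    by (simp add: A_def B_def U_def power_mult[symmetric] mult_ac)
  have "(1 - fps_const a * fps_X) * fps_subst_scale (quot_expansion_term q a b n) q
      = fps_const (qbinom_coeff q a b n) * ((1 - fps_const a * fps_X) * qpoch_fps (a * q) q n)
        * inverse (qpoch_fps (b * q) q n) * (fps_const b * fps_X) ^ n * U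
        * fps_const (q ^ (n * (n - 1))) * (1 - A * fps_const q * U ^ 2 * fps_X)"
    by (simp add: quot_expansion_term_def fps_subst_scale_qpoch_fps A_def U_def
        power_mult_distrib power_mult[symmetric] mult_ac)
  also have "\<dots> = D * (1 - A * U * fps_X) * U * (1 - A * fps_const q * U ^ 2 * fps_X)"
    unfolding qpoch_fps_Suc_shift[symmetric] qpoch_fps_Suc[of a q n] inverse_qpoch_fps_Suc_shift D_def
    by (simp add: A_def U_def mult_ac)
  finally have scaled: "(1 - fps_const a * fps_X) * fps_subst_scale (quot_expansion_term q a b n) q
      = D * (1 - A * U * fps_X) * U * (1 - A * fps_const q * U ^ 2 * fps_X)" .
  have coeff: "fps_const (qbinom_coeff q a b n * (1 - q ^ n)) = fps_const (qbinom_coeff q a b n) * (1 - U)"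
    by (simp add: U_def algebra_simps)
  have telescoper: "quot_expansion_telescoper q a b n = D * (1 - U) * (1 - B * U * fps_X)"
    unfolding quot_expansion_telescoper_def D_def inverse_qpoch_fps_Suc[of b q n] coeff
    by (simp add: B_def U_def mult_ac)
  have telescoper_Suc: "quot_expansion_telescoper q a b (Suc n)
      = D * (B - A * fps_const q * U) * U ^ 2 * fps_X * (1 - A * U * fps_X)"
    by (simp add: quot_expansion_telescoper_Suc[OF q \<open>b \<noteq> 0\<close>] D_def qpoch_fps_Suc[of a q n]
        A_def B_def U_def power_add power_mult mult_ac)
  show ?thesis
    unfolding unscaled scaled telescoper telescoper_Suc by (simp add: algebra_simps power2_eq_square)
qed

lemma qpoch_quot_fps_expansion:
  assumes "norm q < 1" and "b \<noteq> 0"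
  shows "qpoch_quot_fps q a b = fps_suminf (quot_expansion_term q a b)"
proof (rule qdiff_solution_unique)
  show q: "q ^ k \<noteq> 1" if "0 < k" for k
    using assms(1) that by (rule power_neq_one_if_norm_less_one)
  show "qpoch_quot_fps q a b * (1 - fps_const b * fps_X)
      = (1 - fps_const a * fps_X) * fps_subst_scale (qpoch_quot_fps q a b) q"
    using assms(1) by (rule qpoch_quot_fps_qdiff)
  let ?R = "fps_suminf (quot_expansion_term q a b)"
  note dvd_term = fps_X_power_dvd_quot_expansion_term
  have "?R * (1 - fps_const b * fps_X) - (1 - fps_const a * fps_X) * fps_subst_scale ?R q
      = fps_suminf (\<lambda>n. quot_expansion_term q a b n * (1 - fps_const b * fps_X)
          - (1 - fps_const a * fps_X) * fps_subst_scale (quot_expansion_term q a b n) q)"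
    by (simp add: fps_suminf_diff fps_suminf_mult fps_suminf_mult_right fps_subst_scale_suminf
        dvd_term fps_X_power_dvd_subst_scale dvd_mult dvd_mult2)
  also have "\<dots> = fps_suminf (\<lambda>n. quot_expansion_telescoper q a b n - quot_expansion_telescoper q a b (Suc n))"
    by (simp add: quot_expansion_term_qdiff q assms(2))
  also have "\<dots> = 0"
    by (simp add: fps_suminf_telescope fps_X_power_dvd_quot_expansion_telescoper)
  finally show "?R * (1 - fps_const b * fps_X) = (1 - fps_const a * fps_X) * fps_subst_scale ?R q"
    by simp
  show "qpoch_quot_fps q a b $ 0 = ?R $ 0"
    using assms(1) by (simp add: fps_suminf_nth[OF dvd_term] quot_expansion_term_def)
qed

definition gtilde_term :: "complex \<Rightarrow> complex fps \<Rightarrow> complex \<Rightarrow> complex \<Rightarrow> nat \<Rightarrow> complex fps" where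
  "gtilde_term q G \<alpha> \<beta> m = fps_const (G $ m) * fps_X ^ m * qpoch_fps \<alpha> q m * inverse (qpoch_fps \<beta> q m)"

lemma Gtilde_eq_fps_suminf: "Gtilde q G \<alpha> \<beta> = fps_suminf (gtilde_term q G \<alpha> \<beta>)"
  unfolding Gtilde_def gtilde_term_def ..

lemma fps_X_power_dvd_gtilde_term: "fps_X ^ m dvd gtilde_term q G \<alpha> \<beta> m"
  unfolding gtilde_term_def by (simp add: dvd_mult2)

lemma fps_subst_scale_gtilde_term:
  "fps_subst_scale (gtilde_term q G \<alpha> \<beta> m) c
    = fps_const (G $ m * c ^ m) * fps_X ^ m * qpoch_fps (\<alpha> * c) q m * inverse (qpoch_fps (\<beta> * c) q m)"
  by (simp add: gtilde_term_def fps_subst_scale_qpoch_fps power_mult_distrib mult_ac)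

definition expansion_summand ::
    "complex \<Rightarrow> complex \<Rightarrow> complex \<Rightarrow> (complex \<Rightarrow> complex \<Rightarrow> complex fps) \<Rightarrow> nat \<Rightarrow> complex fps" where
  "expansion_summand q a b H n =
     fps_const (qbinom_coeff q a b n) * qpoch_fps a q n * inverse (qpoch_fps b q n)
     * (fps_const b * fps_X) ^ n * fps_const (q ^ (n * (n - 1)))
     * (fps_subst_scale (H a b) (q ^ n)
        - fps_const a * fps_X * fps_const (q ^ (2 * n)) * fps_subst_scale (H (a / q) (b / q)) (q ^ (n + 1)))"

lemma expansion_summand_Gtilde:
  "expansion_summand q a b (Gtilde q G) n
    = fps_suminf (\<lambda>m. expansion_summand q a b (\<lambda>\<alpha> \<beta>. gtilde_term q G \<alpha> \<beta> m) n)"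
  unfolding expansion_summand_def Gtilde_eq_fps_suminf
  by (simp add: fps_subst_scale_suminf fps_suminf_diff fps_suminf_mult fps_X_power_dvd_gtilde_term
      fps_X_power_dvd_subst_scale dvd_mult)

lemma expansion_summand_gtilde_term:
  assumes "q \<noteq> 0" and "b \<noteq> 0"
  shows "expansion_summand q a b (\<lambda>\<alpha> \<beta>. gtilde_term q G \<alpha> \<beta> m) n
    = gtilde_term q G a b m * quot_expansion_term q (a * q ^ m) (b * q ^ m) n"
proof -
  define E where "E = fps_const (qbinom_coeff q a b n) * fps_const (G $ m * (q ^ n) ^ m) * fps_X ^ m
      * (fps_const b * fps_X) ^ n * fps_const (q ^ (n * (n - 1)))
      * (1 - fps_const (a * q ^ m * q ^ (2 * n)) * fps_X)"
  have shifted: "a / q * q ^ (n + 1) = a * q ^ n" "b / q * q ^ (n + 1) = b * q ^ n"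
    using assms(1) by simp_all
  have "fps_subst_scale (gtilde_term q G a b m) (q ^ n)
      - fps_const a * fps_X * fps_const (q ^ (2 * n))
        * fps_subst_scale (gtilde_term q G (a / q) (b / q) m) (q ^ (n + 1))
      = fps_const (G $ m * (q ^ n) ^ m) * fps_X ^ m * qpoch_fps (a * q ^ n) q m
        * inverse (qpoch_fps (b * q ^ n) q m) * (1 - fps_const (a * q ^ m * q ^ (2 * n)) * fps_X)"
    unfolding fps_subst_scale_gtilde_term shifted
    by (simp add: algebra_simps power_add power_mult_distrib)
  then have "expansion_summand q a b (\<lambda>\<alpha> \<beta>. gtilde_term q G \<alpha> \<beta> m) n
      = E * (qpoch_fps a q n * qpoch_fps (a * q ^ n) q m)
          * (inverse (qpoch_fps b q n) * inverse (qpoch_fps (b * q ^ n) q m))"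
    unfolding expansion_summand_def E_def by (simp only: mult_ac)
  also have "\<dots> = E * (qpoch_fps a q m * qpoch_fps (a * q ^ m) q n)
          * (inverse (qpoch_fps b q m) * inverse (qpoch_fps (b * q ^ m) q n))"
    by (simp only: qpoch_fps_add[symmetric] fps_inverse_mult[symmetric] add.commute)
  also have "\<dots> = gtilde_term q G a b m * quot_expansion_term q (a * q ^ m) (b * q ^ m) n"
    unfolding E_def gtilde_term_def quot_expansion_term_def qbinom_coeff_scale[OF power_not_zero[OF assms(1)]]
    by (simp add: power_mult_distrib power_mult[symmetric] mult_ac)
  finally show ?thesis .
qed

lemma qpoch_quot_fps_mult_monomial:
  assumes "norm q < 1" and "q \<noteq> 0" and "b \<noteq> 0"
  shows "qpoch_quot_fps q a b * (fps_const (G $ m) * fps_X ^ m)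
    = fps_suminf (\<lambda>n. gtilde_term q G a b m * quot_expansion_term q (a * q ^ m) (b * q ^ m) n)"
proof -
  have "b * q ^ m \<noteq> 0"
    using assms(2,3) by simp
  then show ?thesis
    by (simp add: qpoch_quot_fps_split[OF assms(1), of a b m] qpoch_quot_fps_expansion[OF assms(1)]
        fps_suminf_mult fps_X_power_dvd_quot_expansion_term gtilde_term_def mult_ac)
qed

theorem theorem1p2:
  fixes a b q :: complex and G :: "complex fps"
  assumes "norm q < 1" and "q \<noteq> 0" and "b \<noteq> 0"
  shows "qpoch_inf_fps a q * inverse (qpoch_inf_fps b q) * G =
    fps_suminf (\<lambda>n.
      fps_const (qpoch (a * q / b) q n / qpoch q q n)
      * qpoch_fps a q n * inverse (qpoch_fps b q n)
      * (fps_const b * fps_X) ^ n * fps_const (q ^ (n * (n - 1)))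
      * (fps_subst_scale (Gtilde q G a b) (q ^ n)
         - fps_const a * fps_X * fps_const (q ^ (2 * n))
           * fps_subst_scale (Gtilde q G (a / q) (b / q)) (q ^ (n + 1))))"
proof -
  define \<phi> where "\<phi> n m = gtilde_term q G a b m * quot_expansion_term q (a * q ^ m) (b * q ^ m) n" for n m
  have dvd_\<phi>: "fps_X ^ n dvd \<phi> n m" "fps_X ^ m dvd \<phi> n m" for n m
    unfolding \<phi>_def
    by (simp_all add: dvd_mult fps_X_power_dvd_quot_expansion_term dvd_mult2 fps_X_power_dvd_gtilde_term)
  have "qpoch_inf_fps a q * inverse (qpoch_inf_fps b q) * G
      = qpoch_quot_fps q a b * fps_suminf (\<lambda>m. fps_const (G $ m) * fps_X ^ m)"
    by (simp add: qpoch_quot_fps_def fps_suminf_monomials)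
  also have "\<dots> = fps_suminf (\<lambda>m. fps_suminf (\<lambda>n. \<phi> n m))"
    by (simp add: fps_suminf_mult[symmetric] qpoch_quot_fps_mult_monomial assms \<phi>_def)
  also have "\<dots> = fps_suminf (\<lambda>n. fps_suminf (\<lambda>m. \<phi> n m))"
    using dvd_\<phi> by (rule fps_suminf_swap)
  also have "\<dots> = fps_suminf (expansion_summand q a b (Gtilde q G))"
    by (intro arg_cong[where f = fps_suminf] ext)
      (simp add: expansion_summand_Gtilde expansion_summand_gtilde_term assms \<phi>_def)
  finally show ?thesis
    unfolding expansion_summand_def qbinom_coeff_def .
qed

end
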